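(* Let $L_1,\dots,L_r$ be linear functionals on complex Laurent polynomials satisfying $L_j[w^k]=L_j[w^{-k}]$ for all $k\in\mathbb N$ and all $j$. Then for $(\bm n;\bm m)\in\mathfrak C_{2r}$, $(\bm n;\bm m)$ is normal if and only if $(\bm m;\bm n)$ is normal, and in that case $\Phi^*_{\bm n;\bm m}(z)=\Phi_{\bm m;\bm n}(1/z)$, $\bm\Xi^*_{\bm n;\bm m}(z)=\bm\Xi_{\bm m;\bm n}(1/z)$, $\alpha_{\bm n;\bm m}=\beta_{\bm m;\bm n}$, $\rho_{\bm n;\bm m,j}=\sigma_{\bm m;\bm n,j}$ (whenever these are defined), and $\gamma^{k\ell}_{\bm n;\bm m}=\eta^{k\ell}_{\bm m;\bm n}$ (whenever these are defined).
   Context: Fix $r\ge1$; $\mathbb N=\{0,1,2,\dots\}$; $\bm e_j$ is the $j$-th standard unit vector of $\mathbb Z^r$; for $\bm v\in\mathbb Z^r$, $|\bm v|=v_1+\dots+v_r$ (signed). Let $c_{k,j}=L_j[w^{-k}]$. $\mathfrak C_{2r}=\{(\bm n;\bm m)\in\mathbb Z^r\times\mathbb Z^r:n_j+m_j\ge0\ \forall j\}$. For $(\bm n;\bm m)\in\mathfrak C_{2r}$, $\bm n\ne-\bm m$, $T_{\bm n;\bm m}$ is the square matrix of size $|\bm n|+|\bm m|$ with rows indexed by $(j,k)$, $1\le j\le r$, $-m_j\le k\le n_j-1$ (ordered by $j$, then increasing $k$), columns indexed by $i=-|\bm m|,\dots,|\bm n|-1$, entries $c_{k-i,j}$; $T_{\bm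 n;-\bm n}:=1$; normal means $\det T_{\bm n;\bm m}\ne0$. For normal $(\bm n;\bm m)$, $\bm n\ne-\bm m$: $\Phi_{\bm n;\bm m}$ is the unique Laurent polynomial in $\operatorname{span}\{z^k\}_{k=-|\bm m|}^{|\bm n|}$ with $z^{|\bm n|}$-coefficient $1$ and $L_j[\Phi_{\bm n;\bm m}(w)w^{-k}]=0$ for $-m_j\le k\le n_j-1$, all $j$; $\Phi^*_{\bm n;\bm m}$ is the unique one in that span with $z^{-|\bm m|}$-coefficient $1$ and $L_j[\Phi^*_{\bm n;\bm m}(w)w^{-k}]=0$ for $-m_j+1\le k\le n_j$; $\bm\Xi_{\bm n;\bm m}=(\Xi_{\bm n;\bm m,j})_{j=1}^r$ is the unique vector with $\Xi_{\bm n;\bm m,j}\in\operatorname{span}\{z^k\}_{k=-n_j}^{m_j-1}$, $\sum_jL_j[\Xi_{\bm n;\bm m,j}(w)w^{-k}]=0$ for $-|\bm n|+1\le k\le|\bm m|-1$ and $=1$ for $k=-|\bm n|$; $\bm\Xi^*_{\bm n;\bm m}$ is the unique vector with $\Xi^*_{\bm n;\bm m,j}\in\operatorname{span}\{z^k\}_{k=-n_j+1}^{m_j}$, the same vanishing conditions, and $=1$ for $k=|\bm m|$. For $\bm n=-\bm m$: $\Phi=\Phi^*=1$, $\bm\Xi=\bm\Xi^*=\bm0$. $\alpha_{\bm n;\bm m}$ := $z^{-|\bm m|}$-coefficient of $\Phi_{\bm n;\bm m}$; $\beta_{\bm n;\bm m}$ := $z^{|\bm n|}$-coefficient of $\Phi^*_{\bm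 n;\bm m}$. $\rho_{\bm n;\bm m,j}=L_j[\Phi_{\bm n;\bm m}(w)w^{-n_j}]/L_j[\Phi_{\bm n-\bm e_j;\bm m}(w)w^{-n_j+1}]$ (defined when $(\bm n;\bm m),(\bm n-\bm e_j;\bm m)\in\mathfrak C_{2r}$ are normal) and $\sigma_{\bm n;\bm m,j}=L_j[\Phi^*_{\bm n;\bm m}(w)w^{m_j}]/L_j[\Phi^*_{\bm n;\bm m-\bm e_j}(w)w^{m_j-1}]$ (defined when $(\bm n;\bm m),(\bm n;\bm m-\bm e_j)\in\mathfrak C_{2r}$ are normal). For $k\ne\ell$: $\gamma^{k\ell}_{\bm n;\bm m}=L_\ell[\Phi_{\bm n+\bm e_k;\bm m}(w)w^{-n_\ell}]/L_\ell[\Phi_{\bm n;\bm m}(w)w^{-n_\ell}]$ (defined when $(\bm n;\bm m),(\bm n+\bm e_k;\bm m),(\bm n+\bm e_\ell;\bm m)$ are normal) and $\eta^{k\ell}_{\bm n;\bm m}=L_\ell[\Phi^*_{\bm n;\bm m+\bm e_k}(w)w^{m_\ell}]/L_\ell[\Phi^*_{\bm n;\bm m}(w)w^{m_\ell}]$ (defined when $(\bm n;\bm m),(\bm n;\bm m+\bm e_k),(\bm n;\bm m+\bm e_\ell)$ are normal). *)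

theory Defs
  imports Complex_Main "Jordan_Normal_Form.Determinant"
begin

text \<open>Indices j range over {0..<r} (0-based instead of 1..r).
  Multi-indices n, m are functions nat => int; only values at j < r matter.
  A Laurent polynomial is its coefficient function int => complex
  (finitely supported); a linear functional on Laurent polynomials is a
  map L :: (int => complex) => complex that is linear on finitely supported
  coefficient functions.\<close>

type_synonym lpoly = "int \<Rightarrow> complex"

definition fin_supp :: "lpoly \<Rightarrow> bool" where
  "fin_supp p \<longleftrightarrow> finite {i. p i \<noteq> 0}"

definition lin_functional :: "(lpoly \<Rightarrow> complex) \<Rightarrow> bool" where
  "lin_functional L \<longleftrightarrow>
     (\<forall>p q. fin_supp p \<longrightarrow> fin_supp q \<longrightarrow> L (\<lambda>i. p i + q i) = L p + L q) \<and>
     (\<forall>c p. fin_supp p \<longrightarrow> L (\<lambda>i. c * p i) = c * L p)"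

definition mono :: "int \<Rightarrow> lpoly" where
  "mono k = (\<lambda>i. if i = k then 1 else 0)"

text \<open>multiplication by w^s\<close>
definition lshift :: "lpoly \<Rightarrow> int \<Rightarrow> lpoly" where
  "lshift p s = (\<lambda>i. p (i - s))"

definition leval :: "lpoly \<Rightarrow> complex \<Rightarrow> complex" where
  "leval p z = (\<Sum>i\<in>{i. p i \<noteq> 0}. p i * z powi i)"

definition in_span :: "int \<Rightarrow> int \<Rightarrow> lpoly \<Rightarrow> bool" where
  "in_span a b p \<longleftrightarrow> (\<forall>i. p i \<noteq> 0 \<longrightarrow> a \<le> i \<and> i \<le> b)"

definition vabs :: "nat \<Rightarrow> (nat \<Rightarrow> int) \<Rightarrow> int" where
  "vabs r v = (\<Sum>j<r. v j)"

definition unitv :: "nat \<Rightarrow> nat \<Rightarrow> int" where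
  "unitv j = (\<lambda>i. if i = j then 1 else 0)"

definition vadd :: "(nat \<Rightarrow> int) \<Rightarrow> (nat \<Rightarrow> int) \<Rightarrow> nat \<Rightarrow> int" where
  "vadd u v = (\<lambda>i. u i + v i)"

definition vsub :: "(nat \<Rightarrow> int) \<Rightarrow> (nat \<Rightarrow> int) \<Rightarrow> nat \<Rightarrow> int" where
  "vsub u v = (\<lambda>i. u i - v i)"

definition inC :: "nat \<Rightarrow> (nat \<Rightarrow> int) \<Rightarrow> (nat \<Rightarrow> int) \<Rightarrow> bool" where
  "inC r n m \<longleftrightarrow> (\<forall>j<r. n j + m j \<ge> 0)"

definition antidiag :: "nat \<Rightarrow> (nat \<Rightarrow> int) \<Rightarrow> (nat \<Rightarrow> int) \<Rightarrow> bool" where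
  "antidiag r n m \<longleftrightarrow> (\<forall>j<r. n j = - m j)"

definition cmom :: "(nat \<Rightarrow> lpoly \<Rightarrow> complex) \<Rightarrow> int \<Rightarrow> nat \<Rightarrow> complex" where
  "cmom L k j = L j (mono (- k))"

definition Trows :: "nat \<Rightarrow> (nat \<Rightarrow> int) \<Rightarrow> (nat \<Rightarrow> int) \<Rightarrow> (nat \<times> int) list" where
  "Trows r n m = concat (map (\<lambda>j. map (\<lambda>k. (j, k)) [- m j..n j - 1]) [0..<r])"

text \<open>the matrix T_{n;m}: columns indexed by i = -|m|, ..., |n|-1\<close>
definition Tmat :: "nat \<Rightarrow> (nat \<Rightarrow> lpoly \<Rightarrow> complex) \<Rightarrow> (nat \<Rightarrow> int) \<Rightarrow> (nat \<Rightarrow> int) \<Rightarrow> complex mat" where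
  "Tmat r L n m = (let N = nat (vabs r n + vabs r m) in
     mat N N (\<lambda>(a, b). let (j, k) = Trows r n m ! a; i = int b - vabs r m
                        in cmom L (k - i) j))"

definition normal :: "nat \<Rightarrow> (nat \<Rightarrow> lpoly \<Rightarrow> complex) \<Rightarrow> (nat \<Rightarrow> int) \<Rightarrow> (nat \<Rightarrow> int) \<Rightarrow> bool" where
  "normal r L n m \<longleftrightarrow> inC r n m \<and> (antidiag r n m \<or> det (Tmat r L n m) \<noteq> 0)"

definition Phi :: "nat \<Rightarrow> (nat \<Rightarrow> lpoly \<Rightarrow> complex) \<Rightarrow> (nat \<Rightarrow> int) \<Rightarrow> (nat \<Rightarrow> int) \<Rightarrow> lpoly" where
  "Phi r L n m = (if antidiag r n m then mono 0 else
     (THE p. in_span (- vabs r m) (vabs r n) p \<and> p (vabs r n) = 1 \<and>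
        (\<forall>j<r. \<forall>k. - m j \<le> k \<and> k \<le> n j - 1 \<longrightarrow> L j (lshift p (- k)) = 0)))"

definition Phistar :: "nat \<Rightarrow> (nat \<Rightarrow> lpoly \<Rightarrow> complex) \<Rightarrow> (nat \<Rightarrow> int) \<Rightarrow> (nat \<Rightarrow> int) \<Rightarrow> lpoly" where
  "Phistar r L n m = (if antidiag r n m then mono 0 else
     (THE p. in_span (- vabs r m) (vabs r n) p \<and> p (- vabs r m) = 1 \<and>
        (\<forall>j<r. \<forall>k. - m j + 1 \<le> k \<and> k \<le> n j \<longrightarrow> L j (lshift p (- k)) = 0)))"

definition Xi :: "nat \<Rightarrow> (nat \<Rightarrow> lpoly \<Rightarrow> complex) \<Rightarrow> (nat \<Rightarrow> int) \<Rightarrow> (nat \<Rightarrow> int) \<Rightarrow> nat \<Rightarrow> lpoly" where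
  "Xi r L n m = (if antidiag r n m then (\<lambda>j i. 0) else
     (THE X. (\<forall>j. r \<le> j \<longrightarrow> X j = (\<lambda>i. 0)) \<and>
        (\<forall>j<r. in_span (- n j) (m j - 1) (X j)) \<and>
        (\<forall>k. - vabs r n + 1 \<le> k \<and> k \<le> vabs r m - 1 \<longrightarrow>
              (\<Sum>j<r. L j (lshift (X j) (- k))) = 0) \<and>
        (\<Sum>j<r. L j (lshift (X j) (vabs r n))) = 1))"

definition Xistar :: "nat \<Rightarrow> (nat \<Rightarrow> lpoly \<Rightarrow> complex) \<Rightarrow> (nat \<Rightarrow> int) \<Rightarrow> (nat \<Rightarrow> int) \<Rightarrow> nat \<Rightarrow> lpoly" where
  "Xistar r L n m = (if antidiag r n m then (\<lambda>j i. 0) else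
     (THE X. (\<forall>j. r \<le> j \<longrightarrow> X j = (\<lambda>i. 0)) \<and>
        (\<forall>j<r. in_span (- n j + 1) (m j) (X j)) \<and>
        (\<forall>k. - vabs r n + 1 \<le> k \<and> k \<le> vabs r m - 1 \<longrightarrow>
              (\<Sum>j<r. L j (lshift (X j) (- k))) = 0) \<and>
        (\<Sum>j<r. L j (lshift (X j) (- vabs r m))) = 1))"

definition alpha :: "nat \<Rightarrow> (nat \<Rightarrow> lpoly \<Rightarrow> complex) \<Rightarrow> (nat \<Rightarrow> int) \<Rightarrow> (nat \<Rightarrow> int) \<Rightarrow> complex" where
  "alpha r L n m = Phi r L n m (- vabs r m)"

definition beta :: "nat \<Rightarrow> (nat \<Rightarrow> lpoly \<Rightarrow> complex) \<Rightarrow> (nat \<Rightarrow> int) \<Rightarrow> (nat \<Rightarrow> int) \<Rightarrow> complex" where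
  "beta r L n m = Phistar r L n m (vabs r n)"

definition rho :: "nat \<Rightarrow> (nat \<Rightarrow> lpoly \<Rightarrow> complex) \<Rightarrow> (nat \<Rightarrow> int) \<Rightarrow> (nat \<Rightarrow> int) \<Rightarrow> nat \<Rightarrow> complex" where
  "rho r L n m j = L j (lshift (Phi r L n m) (- n j)) /
                   L j (lshift (Phi r L (vsub n (unitv j)) m) (- n j + 1))"

definition rho_defined :: "nat \<Rightarrow> (nat \<Rightarrow> lpoly \<Rightarrow> complex) \<Rightarrow> (nat \<Rightarrow> int) \<Rightarrow> (nat \<Rightarrow> int) \<Rightarrow> nat \<Rightarrow> bool" where
  "rho_defined r L n m j \<longleftrightarrow> normal r L n m \<and> normal r L (vsub n (unitv j)) m"

definition sigma :: "nat \<Rightarrow> (nat \<Rightarrow> lpoly \<Rightarrow> complex) \<Rightarrow> (nat \<Rightarrow> int) \<Rightarrow> (nat \<Rightarrow> int) \<Rightarrow> nat \<Rightarrow> complex" where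
  "sigma r L n m j = L j (lshift (Phistar r L n m) (m j)) /
                     L j (lshift (Phistar r L n (vsub m (unitv j))) (m j - 1))"

definition sigma_defined :: "nat \<Rightarrow> (nat \<Rightarrow> lpoly \<Rightarrow> complex) \<Rightarrow> (nat \<Rightarrow> int) \<Rightarrow> (nat \<Rightarrow> int) \<Rightarrow> nat \<Rightarrow> bool" where
  "sigma_defined r L n m j \<longleftrightarrow> normal r L n m \<and> normal r L n (vsub m (unitv j))"

definition gamma :: "nat \<Rightarrow> (nat \<Rightarrow> lpoly \<Rightarrow> complex) \<Rightarrow> (nat \<Rightarrow> int) \<Rightarrow> (nat \<Rightarrow> int) \<Rightarrow> nat \<Rightarrow> nat \<Rightarrow> complex" where
  "gamma r L n m k l = L l (lshift (Phi r L (vadd n (unitv k)) m) (- n l)) /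
                       L l (lshift (Phi r L n m) (- n l))"

definition gamma_defined :: "nat \<Rightarrow> (nat \<Rightarrow> lpoly \<Rightarrow> complex) \<Rightarrow> (nat \<Rightarrow> int) \<Rightarrow> (nat \<Rightarrow> int) \<Rightarrow> nat \<Rightarrow> nat \<Rightarrow> bool" where
  "gamma_defined r L n m k l \<longleftrightarrow> k \<noteq> l \<and> normal r L n m \<and>
      normal r L (vadd n (unitv k)) m \<and> normal r L (vadd n (unitv l)) m"

definition eta :: "nat \<Rightarrow> (nat \<Rightarrow> lpoly \<Rightarrow> complex) \<Rightarrow> (nat \<Rightarrow> int) \<Rightarrow> (nat \<Rightarrow> int) \<Rightarrow> nat \<Rightarrow> nat \<Rightarrow> complex" where
  "eta r L n m k l = L l (lshift (Phistar r L n (vadd m (unitv k))) (m l)) /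
                     L l (lshift (Phistar r L n m) (m l))"

definition eta_defined :: "nat \<Rightarrow> (nat \<Rightarrow> lpoly \<Rightarrow> complex) \<Rightarrow> (nat \<Rightarrow> int) \<Rightarrow> (nat \<Rightarrow> int) \<Rightarrow> nat \<Rightarrow> nat \<Rightarrow> bool" where
  "eta_defined r L n m k l \<longleftrightarrow> k \<noteq> l \<and> normal r L n m \<and>
      normal r L n (vadd m (unitv k)) \<and> normal r L n (vadd m (unitv l))"

end

theory Submission
  imports Defs
begin

text \<open>
  Reflection \<open>p(z) \<mapsto> p(1/z)\<close> maps the span of \<open>z\<^sup>a, ..., z\<^sup>b\<close> onto that of
  \<open>z\<^sup>-\<^sup>b, ..., z\<^sup>-\<^sup>a\<close>, and since every \<open>L\<^sub>j\<close> is invariant under \<open>w \<mapsto> 1/w\<close> it turns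
  \<open>L\<^sub>j[p(w) w\<^sup>k]\<close> into \<open>L\<^sub>j[p(w) w\<^sup>-\<^sup>k]\<close>. Hence it carries the defining conditions
  of \<open>\<Phi>\<^sub>n\<^sub>;\<^sub>m\<close> and \<open>\<Xi>\<^sub>n\<^sub>;\<^sub>m\<close> exactly onto those of \<open>\<Phi>*\<^sub>m\<^sub>;\<^sub>n\<close> and \<open>\<Xi>*\<^sub>m\<^sub>;\<^sub>n\<close>.
  For a normal index these conditions are linear systems with matrix \<open>T\<^sub>n\<^sub>;\<^sub>m\<close>
  (for \<open>\<Xi>\<close> its transpose) and so have unique solutions, which identifies the
  reflected objects with the starred ones; the identities for \<open>\<alpha>, \<beta>, \<rho>, \<sigma>, \<gamma>, \<eta>\<close>
  follow by reading off coefficients and functional values. Normality is symmetric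
  because, by the same invariance, every row of \<open>T\<^sub>n\<^sub>;\<^sub>m\<close> is a row of \<open>T\<^sub>m\<^sub>;\<^sub>n\<close> read
  backwards, so reversing a kernel vector of one gives a kernel vector of the other.
\<close>

section \<open>Laurent polynomials, linear functionals and reflection\<close>

lemma fin_supp_mono [simp]: "fin_supp (mono k)"
  unfolding fin_supp_def mono_def by simp

lemma fin_supp_sum:
  assumes "finite S" and "\<And>s. s \<in> S \<Longrightarrow> fin_supp (g s)"
  shows "fin_supp (\<lambda>x. \<Sum>s\<in>S. c s * g s x)"
  unfolding fin_supp_def
proof (rule finite_subset)
  show "{x. (\<Sum>s\<in>S. c s * g s x) \<noteq> 0} \<subseteq> (\<Union>s\<in>S. {x. g s x \<noteq> 0})"
    by (force intro: sum.neutral)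
  show "finite (\<Union>s\<in>S. {x. g s x \<noteq> 0})"
    using assms unfolding fin_supp_def by blast
qed

lemma lin_functional_zero:
  assumes "lin_functional L"
  shows "L (\<lambda>i. 0) = 0"
proof -
  have "fin_supp (\<lambda>i. 0)"
    unfolding fin_supp_def by simp
  then have "L (\<lambda>i. 0 * 0) = 0 * L (\<lambda>i. 0)"
    using assms unfolding lin_functional_def by blast
  then show ?thesis by simp
qed

lemma lin_functional_sum:
  assumes L: "lin_functional L" and "finite S" and "\<And>s. s \<in> S \<Longrightarrow> fin_supp (g s)"
  shows "L (\<lambda>x. \<Sum>s\<in>S. c s * g s x) = (\<Sum>s\<in>S. c s * L (g s))"
  using assms(2,3)
proof (induction S rule: finite_induct)
  case empty
  then show ?case using lin_functional_zero[OF L] by simp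
next
  case (insert a S)
  have ga: "fin_supp (g a)" and rest: "fin_supp (\<lambda>x. \<Sum>s\<in>S. c s * g s x)"
    using insert fin_supp_sum[of S g c] by auto
  have "fin_supp (\<lambda>x. c a * g a x)"
    using ga unfolding fin_supp_def by (rule finite_subset[rotated]) auto
  then have "L (\<lambda>x. c a * g a x + (\<Sum>s\<in>S. c s * g s x)) = L (\<lambda>x. c a * g a x) + L (\<lambda>x. \<Sum>s\<in>S. c s * g s x)"
    using L rest unfolding lin_functional_def by blast
  moreover have "L (\<lambda>x. c a * g a x) = c a * L (g a)"
    using L ga unfolding lin_functional_def by blast
  ultimately show ?case using insert by simp
qed

lemma lshift_0 [simp]: "lshift p 0 = p"
  unfolding lshift_def by simp

lemma in_span_lshift: "in_span a b p \<Longrightarrow> in_span (a + s) (b + s) (lshift p s)"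
  unfolding in_span_def lshift_def by force

lemma lin_functional_lshift:
  assumes L: "lin_functional L" and p: "in_span a b p"
  shows "L (lshift p s) = (\<Sum>i\<in>{a..b}. p i * L (mono (i + s)))"
proof -
  have "lshift p s x = (\<Sum>i\<in>{a..b}. p i * mono (i + s) x)" for x
  proof -
    have "(\<Sum>i\<in>{a..b}. p i * mono (i + s) x) = (\<Sum>i\<in>{a..b}. if i = x - s then p i else 0)"
      by (rule sum.cong) (auto simp: mono_def)
    also have "\<dots> = lshift p s x"
      using p unfolding in_span_def lshift_def by (auto simp: sum.delta')
    finally show ?thesis by simp
  qed
  then have "lshift p s = (\<lambda>x. \<Sum>i\<in>{a..b}. p i * mono (i + s) x)" ..
  then show ?thesis by (simp add: lin_functional_sum[OF L])
qed

definition lreflect :: "lpoly \<Rightarrow> lpoly" where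
  "lreflect p = (\<lambda>i. p (- i))"

lemma lreflect_lreflect [simp]: "lreflect (lreflect p) = p"
  unfolding lreflect_def by simp

lemma in_span_lreflect_iff: "in_span a b (lreflect p) \<longleftrightarrow> in_span (- b) (- a) p"
  unfolding in_span_def lreflect_def by (metis add.inverse_inverse neg_le_iff_le)

lemma lshift_lreflect: "lshift (lreflect p) s = lreflect (lshift p (- s))"
  unfolding lshift_def lreflect_def by (simp add: algebra_simps)

lemma leval_lreflect: "leval (lreflect p) z = leval p (1 / z)"
  unfolding leval_def lreflect_def
  by (rule sum.reindex_bij_witness[of _ uminus uminus])
     (auto simp: power_int_minus power_int_inverse divide_inverse)

lemma lreflect_mono: "lreflect (mono k) = mono (- k)"
  unfolding lreflect_def mono_def by auto

lemma lreflect_eq_zero_iff: "lreflect p = (\<lambda>i. 0) \<longleftrightarrow> p = (\<lambda>i. 0)"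
  unfolding lreflect_def fun_eq_iff by (metis minus_minus)

definition reflection_symmetric :: "(lpoly \<Rightarrow> complex) \<Rightarrow> bool" where
  "reflection_symmetric L \<longleftrightarrow> (\<forall>k::nat. L (mono (int k)) = L (mono (- int k)))"

lemma reflection_symmetric_mono:
  assumes "reflection_symmetric L"
  shows "L (mono (- i)) = L (mono i)"
proof (cases "i \<ge> 0")
  case True
  then obtain k :: nat where "i = int k"
    using nonneg_eq_int by blast
  then show ?thesis
    using assms unfolding reflection_symmetric_def by simp
next
  case False
  then obtain k :: nat where "- i = int k"
    using nonneg_eq_int[of "- i"] by force
  then have "i = - int k" by simp
  then show ?thesis
    using assms unfolding reflection_symmetric_def by simp
qed

lemma lin_functional_lreflect:
  assumes L: "lin_functional L" and symm: "reflection_symmetric L" and p: "in_span a b p"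
  shows "L (lreflect p) = L p"
proof -
  have "in_span (- b) (- a) (lreflect p)"
    using p by (simp add: in_span_lreflect_iff)
  then have "L (lreflect p) = (\<Sum>i\<in>{- b..- a}. lreflect p i * L (mono i))"
    using lin_functional_lshift[OF L, of "- b" "- a" "lreflect p" 0] by simp
  also have "\<dots> = (\<Sum>i\<in>{a..b}. p i * L (mono (- i)))"
    by (rule sum.reindex_bij_witness[of _ uminus uminus]) (auto simp: lreflect_def)
  also have "\<dots> = L p"
    using lin_functional_lshift[OF L p, of 0] by (simp add: reflection_symmetric_mono[OF symm])
  finally show ?thesis .
qed

lemma lin_functional_lshift_lreflect:
  assumes "lin_functional L" and "reflection_symmetric L" and "in_span a b p"
  shows "L (lshift (lreflect p) s) = L (lshift p (- s))"
  unfolding lshift_lreflect by (rule lin_functional_lreflect[OF assms(1,2) in_span_lshift[OF assms(3)]])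

section \<open>Integer intervals, bijections and square linear systems\<close>

lemma all_interval_uminus_iff:
  "(\<forall>k::int. a \<le> k \<and> k \<le> b \<longrightarrow> P (- k)) \<longleftrightarrow> (\<forall>k. - b \<le> k \<and> k \<le> - a \<longrightarrow> P k)"
proof -
  have "(\<forall>k::int. a \<le> k \<and> k \<le> b \<longrightarrow> P (- k)) \<longleftrightarrow> (\<forall>k. a \<le> - k \<and> - k \<le> b \<longrightarrow> P (- (- k)))"
    by (metis minus_minus)
  then show ?thesis
    by (simp add: minus_le_iff le_minus_iff conj_commute)
qed

lemma all_interval_indicator_iff:
  fixes F :: "int \<Rightarrow> 'a::zero_neq_one"
  assumes "0 < N"
  shows "(\<forall>c<N. F (a + int c) = (if c = N - 1 then 1 else 0)) \<longleftrightarrow>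
    (\<forall>s. a \<le> s \<and> s < a + int N - 1 \<longrightarrow> F s = 0) \<and> F (a + int N - 1) = 1"
proof
  assume F: "\<forall>c<N. F (a + int c) = (if c = N - 1 then 1 else 0)"
  have "F s = 0" if "a \<le> s" "s < a + int N - 1" for s
    using F[rule_format, of "nat (s - a)"] that by simp
  moreover have "F (a + int N - 1) = 1"
    using F[rule_format, of "N - 1"] assms by (simp add: of_nat_diff algebra_simps)
  ultimately show "(\<forall>s. a \<le> s \<and> s < a + int N - 1 \<longrightarrow> F s = 0) \<and> F (a + int N - 1) = 1"
    by blast
next
  assume "(\<forall>s. a \<le> s \<and> s < a + int N - 1 \<longrightarrow> F s = 0) \<and> F (a + int N - 1) = 1"
  then show "\<forall>c<N. F (a + int c) = (if c = N - 1 then 1 else 0)"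
    using assms by (auto simp: of_nat_diff add_diff_eq)
qed

lemma The_eq_involution:
  assumes ex1: "\<exists>!x. P x" and inv: "\<And>x. f (f x) = x" and Q: "\<And>x. Q x \<longleftrightarrow> P (f x)"
  shows "(THE x. Q x) = f (THE x. P x)"
proof (rule the_equality)
  show "Q (f (THE x. P x))"
    unfolding Q inv by (rule theI'[OF ex1])
next
  fix x assume "Q x"
  then have "f x = (THE x. P x)"
    unfolding Q by (rule the1_equality[OF ex1, symmetric])
  then show "x = f (THE x. P x)"
    using inv by metis
qed

lemma bij_betw_ex1_transfer:
  assumes bij: "bij_betw f S T" and P: "\<And>x. P x \<Longrightarrow> x \<in> S"
    and PQ: "\<And>x. x \<in> S \<Longrightarrow> P x \<longleftrightarrow> Q (f x)" and ex1: "\<exists>!y. y \<in> T \<and> Q y"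
  shows "\<exists>!x. P x"
proof -
  obtain y where y: "y \<in> T" "Q y" and uniq: "\<And>y'. y' \<in> T \<Longrightarrow> Q y' \<Longrightarrow> y' = y"
    using ex1 by blast
  obtain x where x: "x \<in> S" "f x = y"
    using bij y(1) unfolding bij_betw_def by blast
  show ?thesis
  proof (rule ex1I)
    show "P x"
      using PQ x y by simp
  next
    fix x' assume "P x'"
    then have "x' \<in> S" "f x' = y"
      using P PQ uniq bij_betw_apply[OF bij] by blast+
    then show "x' = x"
      using x bij unfolding bij_betw_def by (metis inj_onD)
  qed
qed

lemma sum_nth_distinct:
  assumes "distinct xs"
  shows "(\<Sum>a<length xs. f (xs ! a)) = (\<Sum>x\<in>set xs. f x)"
  using sum.reindex_bij_betw[OF bij_betw_nth[OF assms refl refl], of f] by simp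

lemma bij_betw_vec_nth:
  assumes xs: "distinct xs"
  shows "bij_betw (\<lambda>\<phi>. vec (length xs) (\<lambda>a. \<phi> (xs ! a)))
    {\<phi>. \<forall>x. x \<notin> set xs \<longrightarrow> \<phi> x = 0} (carrier_vec (length xs))"
proof -
  have nth: "bij_betw ((!) xs) {..<length xs} (set xs)"
    by (rule bij_betw_nth[OF xs refl refl])
  define idx where "idx = the_inv_into {..<length xs} ((!) xs)"
  have idx: "idx x < length xs" "xs ! idx x = x" if "x \<in> set xs" for x
    using that nth the_inv_into_into[of "(!) xs" "{..<length xs}" x] f_the_inv_into_f_bij_betw[OF nth]
    unfolding idx_def bij_betw_def by auto
  have idx_nth: "idx (xs ! a) = a" if "a < length xs" for a
    using that nth the_inv_into_f_f unfolding idx_def bij_betw_def by fastforce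
  show ?thesis
  proof (rule bij_betw_byWitness[where f' = "\<lambda>v x. if x \<in> set xs then v $ idx x else 0"])
    show "\<forall>\<phi>\<in>{\<phi>. \<forall>x. x \<notin> set xs \<longrightarrow> \<phi> x = 0}.
        (\<lambda>x. if x \<in> set xs then vec (length xs) (\<lambda>a. \<phi> (xs ! a)) $ idx x else 0) = \<phi>"
      using idx by auto
    show "\<forall>v\<in>carrier_vec (length xs).
        vec (length xs) (\<lambda>a. if xs ! a \<in> set xs then v $ idx (xs ! a) else 0) = v"
      using idx_nth by (auto intro!: eq_vecI)
  qed auto
qed

lemma bij_betw_fun_upd_zero:
  assumes "x \<notin> A"
  shows "bij_betw (\<lambda>p. p(x := 0))
    {p. (\<forall>i. i \<notin> insert x A \<longrightarrow> p i = 0) \<and> p x = 1} {q. \<forall>i. i \<notin> A \<longrightarrow> q i = (0::'a::zero_neq_one)}"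
  by (rule bij_betw_byWitness[where f' = "\<lambda>q. q(x := 1)"]) (use assms in \<open>auto simp: fun_eq_iff\<close>)

lemma mult_mat_vec_index:
  assumes "A \<in> carrier_mat M N" and "v \<in> carrier_vec N" and "a < M"
  shows "(A *\<^sub>v v) $ a = (\<Sum>c<N. A $$ (a, c) * v $ c)"
  using assms by (auto simp: scalar_prod_def atLeast0LessThan)

lemma ex1_mult_mat_vec_eq:
  fixes A :: "'a::field mat"
  assumes A: "A \<in> carrier_mat N N" and det: "det A \<noteq> 0" and b: "b \<in> carrier_vec N"
  shows "\<exists>!x. x \<in> carrier_vec N \<and> A *\<^sub>v x = b"
proof -
  obtain B where B: "B \<in> carrier_mat N N" "B * A = 1\<^sub>m N" "A * B = 1\<^sub>m N"
    using det_non_zero_imp_unit[OF A det, of undefined] unfolding Units_def ring_mat_simps by auto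
  show ?thesis
  proof (rule ex1I[of _ "B *\<^sub>v b"])
    show "B *\<^sub>v b \<in> carrier_vec N \<and> A *\<^sub>v (B *\<^sub>v b) = b"
      using A B b by (simp flip: assoc_mult_mat_vec)
  next
    fix x assume x: "x \<in> carrier_vec N \<and> A *\<^sub>v x = b"
    then have "x = (B * A) *\<^sub>v x"
      using B by simp
    also have "\<dots> = B *\<^sub>v (A *\<^sub>v x)"
      using assoc_mult_mat_vec[OF B(1) A] x by blast
    also have "\<dots> = B *\<^sub>v b"
      using x by simp
    finally show "x = B *\<^sub>v b" .
  qed
qed

lemma det_zero_of_rows_reversed:
  fixes A B :: "'a::idom mat"
  assumes A: "A \<in> carrier_mat N N" and B: "B \<in> carrier_mat N N"
    and rows: "\<And>a. a < N \<Longrightarrow> \<exists>a'<N. \<forall>c<N. A $$ (a, c) = B $$ (a', N - 1 - c)"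
    and det: "det B = 0"
  shows "det A = 0"
proof -
  obtain v where v: "v \<in> carrier_vec N" "v \<noteq> 0\<^sub>v N" "B *\<^sub>v v = 0\<^sub>v N"
    using det det_0_iff_vec_prod_zero[OF B] by blast
  define w where "w = vec N (\<lambda>c. v $ (N - 1 - c))"
  have "w \<noteq> 0\<^sub>v N"
  proof
    assume "w = 0\<^sub>v N"
    moreover have "v $ c = w $ (N - 1 - c)" if "c < N" for c
      using that unfolding w_def by simp
    ultimately have "v $ c = 0" if "c < N" for c
      using that by simp
    then have "v = 0\<^sub>v N"
      using v(1) by (intro eq_vecI) auto
    with v(2) show False ..
  qed
  moreover have "A *\<^sub>v w = 0\<^sub>v N"
  proof (rule eq_vecI)
    fix a assume "a < dim_vec (0\<^sub>v N :: 'a vec)"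
    then have a: "a < N" by simp
    obtain a' where a': "a' < N" "\<forall>c<N. A $$ (a, c) = B $$ (a', N - 1 - c)"
      using rows[OF a] by blast
    have "(A *\<^sub>v w) $ a = (\<Sum>c<N. B $$ (a', N - 1 - c) * v $ (N - 1 - c))"
      using mult_mat_vec_index[OF A _ a, of w] a'(2) unfolding w_def by simp
    also have "\<dots> = (\<Sum>c<N. B $$ (a', c) * v $ c)"
      by (rule sum.reindex_bij_witness[of _ "\<lambda>c. N - 1 - c" "\<lambda>c. N - 1 - c"]) auto
    also have "\<dots> = (B *\<^sub>v v) $ a'"
      using mult_mat_vec_index[OF B v(1) a'(1)] by simp
    finally show "(A *\<^sub>v w) $ a = 0\<^sub>v N $ a"
      using v(3) a a'(1) by simp
  qed (use A in simp)
  moreover have "w \<in> carrier_vec N"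
    unfolding w_def by simp
  ultimately show ?thesis
    using det_0_iff_vec_prod_zero[OF A] by blast
qed

section \<open>The moment matrix\<close>

lemma set_Trows: "set (Trows r n m) = {(j, k). j < r \<and> - m j \<le> k \<and> k \<le> n j - 1}"
  unfolding Trows_def by auto

lemma distinct_Trows: "distinct (Trows r n m)"
proof (induction r)
  case 0
  then show ?case by (simp add: Trows_def)
next
  case (Suc r)
  have "Trows (Suc r) n m = Trows r n m @ map (\<lambda>k. (r, k)) [- m r..n r - 1]"
    unfolding Trows_def by simp
  moreover have "set (Trows r n m) \<inter> set (map (\<lambda>k. (r, k)) [- m r..n r - 1]) = {}"
    unfolding set_Trows by auto
  ultimately show ?case
    using Suc by (simp add: distinct_map inj_on_def)
qed

lemma vabs_add: "vabs r n + vabs r m = (\<Sum>j<r. n j + m j)"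
  unfolding vabs_def by (simp add: sum.distrib)

lemma vabs_add_nonneg: "inC r n m \<Longrightarrow> 0 \<le> vabs r n + vabs r m"
  unfolding vabs_add inC_def by (auto intro: sum_nonneg)

lemma length_Trows:
  assumes "inC r n m"
  shows "length (Trows r n m) = nat (vabs r n + vabs r m)"
proof -
  have "length (Trows r n m) = (\<Sum>j<r. nat (n j + m j))"
    unfolding Trows_def by (simp add: length_concat sum_list_sum_nth atLeast0LessThan)
  also have "int \<dots> = vabs r n + vabs r m"
    using assms unfolding vabs_add inC_def by (auto intro: sum.cong)
  finally show ?thesis by linarith
qed

lemma inC_swap: "inC r n m \<Longrightarrow> inC r m n"
  unfolding inC_def by (simp add: add.commute)

lemma antidiag_swap: "antidiag r n m \<longleftrightarrow> antidiag r m n"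
  unfolding antidiag_def by auto

lemma vabs_add_pos:
  assumes "inC r n m" and "\<not> antidiag r n m"
  shows "vabs r n + vabs r m > 0"
proof -
  obtain j where j: "j < r" "n j + m j > 0"
    using assms unfolding inC_def antidiag_def by force
  have "n j + m j \<le> (\<Sum>j<r. n j + m j)"
    using assms(1) j(1) unfolding inC_def by (intro member_le_sum) auto
  then show ?thesis
    using j(2) unfolding vabs_add by linarith
qed

lemma Tmat_carrier: "Tmat r L n m \<in> carrier_mat (nat (vabs r n + vabs r m)) (nat (vabs r n + vabs r m))"
  unfolding Tmat_def Let_def by simp

lemma Tmat_index:
  assumes "a < nat (vabs r n + vabs r m)" and "c < nat (vabs r n + vabs r m)"
    and "Trows r n m ! a = (j, k)"
  shows "Tmat r L n m $$ (a, c) = L j (mono (int c - vabs r m - k))"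
  using assms unfolding Tmat_def cmom_def Let_def by simp

lemma det_Tmat_swap_zero:
  assumes symm: "\<forall>j<r. reflection_symmetric (L j)"
    and C: "inC r n m" and det: "det (Tmat r L m n) = 0"
  shows "det (Tmat r L n m) = 0"
proof -
  define N where "N = nat (vabs r n + vabs r m)"
  have len: "length (Trows r n m) = N" "length (Trows r m n) = N"
    using length_Trows[OF C] length_Trows[OF inC_swap[OF C]] unfolding N_def
    by (simp_all add: add.commute)
  have "\<exists>a'<N. \<forall>c<N. Tmat r L n m $$ (a, c) = Tmat r L m n $$ (a', N - 1 - c)" if a: "a < N" for a
  proof -
    obtain j k where jk: "Trows r n m ! a = (j, k)"
      by fastforce
    then have "(j, k) \<in> set (Trows r n m)"
      using a len(1) by (metis nth_mem)
    then have j: "j < r" and "(j, - k - 1) \<in> set (Trows r m n)"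
      unfolding set_Trows by auto
    then obtain a' where a': "a' < N" "Trows r m n ! a' = (j, - k - 1)"
      using len(2) by (metis in_set_conv_nth)
    have "Tmat r L n m $$ (a, c) = Tmat r L m n $$ (a', N - 1 - c)" if c: "c < N" for c
    proof -
      have "Tmat r L m n $$ (a', N - 1 - c) = L j (mono (int (N - 1 - c) - vabs r n - (- k - 1)))"
        using Tmat_index[of a' r m n "N - 1 - c" j "- k - 1" L] a' c unfolding N_def
        by (simp add: add.commute)
      also have "int (N - 1 - c) - vabs r n - (- k - 1) = - (int c - vabs r m - k)"
        using c unfolding N_def by linarith
      also have "L j (mono (- (int c - vabs r m - k))) = L j (mono (int c - vabs r m - k))"
        by (rule reflection_symmetric_mono) (use symm j in blast)
      also have "\<dots> = Tmat r L n m $$ (a, c)"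
        using Tmat_index[of a r n m c j k L] a c jk unfolding N_def by simp
      finally show ?thesis ..
    qed
    with a' show ?thesis by blast
  qed
  then show ?thesis
    using det_zero_of_rows_reversed[OF _ _ _ det] Tmat_carrier[of r L n m] Tmat_carrier[of r L m n]
    unfolding N_def by (simp add: add.commute)
qed

lemma normal_swap:
  assumes "\<forall>j<r. reflection_symmetric (L j)"
  shows "normal r L n m \<longleftrightarrow> normal r L m n"
proof -
  have "det (Tmat r L n m) = 0 \<longleftrightarrow> det (Tmat r L m n) = 0" if "inC r n m"
    using det_Tmat_swap_zero[OF assms that] det_Tmat_swap_zero[OF assms inC_swap[OF that]] by blast
  then show ?thesis
    unfolding normal_def using inC_swap antidiag_swap by blast
qed

section \<open>Existence and uniqueness of \<open>\<Phi>\<close> and \<open>\<Xi>\<close>\<close>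

definition Phi_cond ::
  "nat \<Rightarrow> (nat \<Rightarrow> lpoly \<Rightarrow> complex) \<Rightarrow> (nat \<Rightarrow> int) \<Rightarrow> (nat \<Rightarrow> int) \<Rightarrow> lpoly \<Rightarrow> bool" where
  "Phi_cond r L n m p \<longleftrightarrow> in_span (- vabs r m) (vabs r n) p \<and> p (vabs r n) = 1 \<and>
     (\<forall>j<r. \<forall>k. - m j \<le> k \<and> k \<le> n j - 1 \<longrightarrow> L j (lshift p (- k)) = 0)"

definition Phistar_cond ::
  "nat \<Rightarrow> (nat \<Rightarrow> lpoly \<Rightarrow> complex) \<Rightarrow> (nat \<Rightarrow> int) \<Rightarrow> (nat \<Rightarrow> int) \<Rightarrow> lpoly \<Rightarrow> bool" where
  "Phistar_cond r L n m p \<longleftrightarrow> in_span (- vabs r m) (vabs r n) p \<and> p (- vabs r m) = 1 \<and>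
     (\<forall>j<r. \<forall>k. - m j + 1 \<le> k \<and> k \<le> n j \<longrightarrow> L j (lshift p (- k)) = 0)"

definition Xi_cond ::
  "nat \<Rightarrow> (nat \<Rightarrow> lpoly \<Rightarrow> complex) \<Rightarrow> (nat \<Rightarrow> int) \<Rightarrow> (nat \<Rightarrow> int) \<Rightarrow> (nat \<Rightarrow> lpoly) \<Rightarrow> bool" where
  "Xi_cond r L n m X \<longleftrightarrow> (\<forall>j. r \<le> j \<longrightarrow> X j = (\<lambda>i. 0)) \<and>
     (\<forall>j<r. in_span (- n j) (m j - 1) (X j)) \<and>
     (\<forall>k. - vabs r n + 1 \<le> k \<and> k \<le> vabs r m - 1 \<longrightarrow> (\<Sum>j<r. L j (lshift (X j) (- k))) = 0) \<and>
     (\<Sum>j<r. L j (lshift (X j) (vabs r n))) = 1"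

definition Xistar_cond ::
  "nat \<Rightarrow> (nat \<Rightarrow> lpoly \<Rightarrow> complex) \<Rightarrow> (nat \<Rightarrow> int) \<Rightarrow> (nat \<Rightarrow> int) \<Rightarrow> (nat \<Rightarrow> lpoly) \<Rightarrow> bool" where
  "Xistar_cond r L n m X \<longleftrightarrow> (\<forall>j. r \<le> j \<longrightarrow> X j = (\<lambda>i. 0)) \<and>
     (\<forall>j<r. in_span (- n j + 1) (m j) (X j)) \<and>
     (\<forall>k. - vabs r n + 1 \<le> k \<and> k \<le> vabs r m - 1 \<longrightarrow> (\<Sum>j<r. L j (lshift (X j) (- k))) = 0) \<and>
     (\<Sum>j<r. L j (lshift (X j) (- vabs r m))) = 1"

lemma Phi_eq_The: "\<not> antidiag r n m \<Longrightarrow> Phi r L n m = (THE p. Phi_cond r L n m p)"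
  unfolding Phi_def Phi_cond_def by simp

lemma Phistar_eq_The: "\<not> antidiag r n m \<Longrightarrow> Phistar r L n m = (THE p. Phistar_cond r L n m p)"
  unfolding Phistar_def Phistar_cond_def by simp

lemma Xi_eq_The: "\<not> antidiag r n m \<Longrightarrow> Xi r L n m = (THE X. Xi_cond r L n m X)"
  unfolding Xi_def Xi_cond_def by simp

lemma Xistar_eq_The: "\<not> antidiag r n m \<Longrightarrow> Xistar r L n m = (THE X. Xistar_cond r L n m X)"
  unfolding Xistar_def Xistar_cond_def by simp

lemma Xi_support_iff:
  "(\<forall>j t. (j, - t - 1) \<notin> set (Trows r n m) \<longrightarrow> X j t = 0) \<longleftrightarrow>
   (\<forall>j. r \<le> j \<longrightarrow> X j = (\<lambda>i. 0)) \<and> (\<forall>j<r. in_span (- n j) (m j - 1) (X j))"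
proof -
  have mem: "(j, - t - 1) \<in> set (Trows r n m) \<longleftrightarrow> j < r \<and> - n j \<le> t \<and> t \<le> m j - 1" for j t
    unfolding set_Trows by auto
  show ?thesis
  proof
    assume X: "\<forall>j t. (j, - t - 1) \<notin> set (Trows r n m) \<longrightarrow> X j t = 0"
    have "X j = (\<lambda>i. 0)" if "r \<le> j" for j
      using X that unfolding mem by auto
    moreover have "in_span (- n j) (m j - 1) (X j)" if "j < r" for j
      using X that unfolding mem in_span_def by force
    ultimately show "(\<forall>j. r \<le> j \<longrightarrow> X j = (\<lambda>i. 0)) \<and> (\<forall>j<r. in_span (- n j) (m j - 1) (X j))"
      by blast
  next
    assume "(\<forall>j. r \<le> j \<longrightarrow> X j = (\<lambda>i. 0)) \<and> (\<forall>j<r. in_span (- n j) (m j - 1) (X j))"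
    then show "\<forall>j t. (j, - t - 1) \<notin> set (Trows r n m) \<longrightarrow> X j t = 0"
      unfolding mem in_span_def by (metis not_le)
  qed
qed

lemma bij_betw_coeffs_Phi:
  assumes C: "inC r n m"
  defines "N \<equiv> nat (vabs r n + vabs r m)"
  shows "bij_betw (\<lambda>p. vec N (\<lambda>c. p (int c - vabs r m)))
    {p. in_span (- vabs r m) (vabs r n) p \<and> p (vabs r n) = 1} (carrier_vec N)"
proof -
  define M K where "M = vabs r m" and "K = vabs r n"
  define xs where "xs = [- M..K - 1]"
  have "in_span (- M) K p \<longleftrightarrow> (\<forall>i. i \<notin> {- M..K} \<longrightarrow> p i = 0)" for p
    unfolding in_span_def by auto
  moreover have "{- M..K} = insert K (set xs)"
    using vabs_add_nonneg[OF C] unfolding xs_def M_def K_def by auto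
  ultimately have S: "{p. in_span (- M) K p \<and> p K = 1} =
      {p. (\<forall>i. i \<notin> insert K (set xs) \<longrightarrow> p i = 0) \<and> p K = 1}"
    by simp
  have "bij_betw (\<lambda>p. p(K := 0)) {p. in_span (- M) K p \<and> p K = 1}
      {q. \<forall>i. i \<notin> set xs \<longrightarrow> q i = 0}"
    unfolding S by (rule bij_betw_fun_upd_zero) (simp add: xs_def)
  from bij_betw_trans[OF this bij_betw_vec_nth[OF distinct_upto[of "- M" "K - 1", folded xs_def]]]
  have "bij_betw (\<lambda>p. vec N (\<lambda>c. (p(K := 0)) (xs ! c))) {p. in_span (- M) K p \<and> p K = 1} (carrier_vec N)"
    by (simp add: o_def xs_def N_def M_def K_def add.commute)
  moreover have "(\<lambda>p. vec N (\<lambda>c. (p(K := 0)) (xs ! c))) = (\<lambda>p. vec N (\<lambda>c. p (int c - M)))"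
    by (intro ext eq_vecI) (auto simp: xs_def N_def M_def K_def)
  ultimately have "bij_betw (\<lambda>p. vec N (\<lambda>c. p (int c - M))) {p. in_span (- M) K p \<and> p K = 1} (carrier_vec N)"
    by (rule back_subst[where P = "\<lambda>f. bij_betw f {p. in_span (- M) K p \<and> p K = 1} (carrier_vec N)"])
  then show ?thesis
    unfolding M_def K_def .
qed

text \<open>
  The coefficient of \<open>w\<^sup>t\<close> in \<open>\<Xi>\<^sub>j\<close> is stored at the position of row \<open>(j, -t-1)\<close> of \<open>T\<close>;
  with this encoding the conditions on \<open>\<Xi>\<close> become the transposed system.
\<close>

lemma bij_betw_coeffs_Xi:
  assumes C: "inC r n m"
  defines "N \<equiv> nat (vabs r n + vabs r m)"
  shows "bij_betw (\<lambda>X. vec N (\<lambda>a. case Trows r n m ! a of (j, k) \<Rightarrow> X j (- k - 1)))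
    {X :: nat \<Rightarrow> lpoly. \<forall>j t. (j, - t - 1) \<notin> set (Trows r n m) \<longrightarrow> X j t = 0} (carrier_vec N)"
proof -
  have "bij_betw (\<lambda>X (j, k). X j (- k - 1))
      {X :: nat \<Rightarrow> lpoly. \<forall>j t. (j, - t - 1) \<notin> set (Trows r n m) \<longrightarrow> X j t = 0}
      {\<phi>. \<forall>x. x \<notin> set (Trows r n m) \<longrightarrow> \<phi> x = 0}"
    by (rule bij_betw_byWitness[where f' = "\<lambda>\<phi> j t. \<phi> (j, - t - 1)"]) auto
  from bij_betw_trans[OF this bij_betw_vec_nth[OF distinct_Trows]]
  show ?thesis
    using length_Trows[OF C] unfolding N_def by (simp add: o_def)
qed

locale moment_functionals =
  fixes r :: nat and L :: "nat \<Rightarrow> lpoly \<Rightarrow> complex"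
  assumes lin: "\<And>j. j < r \<Longrightarrow> lin_functional (L j)"
begin

lemma Tmat_mult_coeffs_Phi:
  assumes C: "inC r n m" and p: "in_span (- vabs r m) (vabs r n) p" "p (vabs r n) = 1"
    and a: "a < nat (vabs r n + vabs r m)" and jk: "Trows r n m ! a = (j, k)"
  shows "(Tmat r L n m *\<^sub>v vec (nat (vabs r n + vabs r m)) (\<lambda>c. p (int c - vabs r m))) $ a =
    L j (lshift p (- k)) - L j (mono (vabs r n - k))"
proof -
  define M K N where "M = vabs r m" and "K = vabs r n" and "N = nat (vabs r n + vabs r m)"
  have j: "j < r"
    using nth_mem[of a "Trows r n m"] a jk length_Trows[OF C] by (auto simp: set_Trows)
  have "(Tmat r L n m *\<^sub>v vec N (\<lambda>c. p (int c - M))) $ a =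
      (\<Sum>c<N. L j (mono (int c - M - k)) * p (int c - M))"
    using mult_mat_vec_index[OF Tmat_carrier _ a, of "vec N (\<lambda>c. p (int c - M))"]
      Tmat_index[OF a _ jk] unfolding N_def M_def by simp
  also have "\<dots> = (\<Sum>i\<in>{- M..K - 1}. p i * L j (mono (i + - k)))"
    by (rule sum.reindex_bij_witness[of _ "\<lambda>i. nat (i + M)" "\<lambda>c. int c - M"])
      (auto simp: N_def M_def K_def)
  also have "\<dots> = L j (lshift p (- k)) - L j (mono (K - k))"
  proof -
    have "{- M..K} = insert K {- M..K - 1}"
      using vabs_add_nonneg[OF C] unfolding M_def K_def by auto
    then show ?thesis
      using lin_functional_lshift[OF lin[OF j] p(1), of "- k"] p(2) unfolding M_def K_def by simp
  qed
  finally show ?thesis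
    unfolding N_def M_def K_def .
qed

lemma Phi_cond_iff_Tmat_equation:
  assumes C: "inC r n m" and p: "in_span (- vabs r m) (vabs r n) p" "p (vabs r n) = 1"
  defines "N \<equiv> nat (vabs r n + vabs r m)"
  shows "Phi_cond r L n m p \<longleftrightarrow>
    Tmat r L n m *\<^sub>v vec N (\<lambda>c. p (int c - vabs r m)) =
    vec N (\<lambda>a. case Trows r n m ! a of (j, k) \<Rightarrow> - L j (mono (vabs r n - k)))"
    (is "_ \<longleftrightarrow> ?Tx = ?b")
proof -
  have "Phi_cond r L n m p \<longleftrightarrow> (\<forall>(j, k)\<in>set (Trows r n m). L j (lshift p (- k)) = 0)"
    using p unfolding Phi_cond_def set_Trows by auto
  also have "\<dots> \<longleftrightarrow> (\<forall>a<N. ?Tx $ a = ?b $ a)"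
  proof -
    have "(case Trows r n m ! a of (j, k) \<Rightarrow> L j (lshift p (- k)) = 0) \<longleftrightarrow> ?Tx $ a = ?b $ a"
      if "a < N" for a
      using Tmat_mult_coeffs_Phi[OF C p] that unfolding N_def by (cases "Trows r n m ! a") auto
    then show ?thesis
      unfolding all_set_conv_all_nth length_Trows[OF C] N_def by auto
  qed
  also have "\<dots> \<longleftrightarrow> ?Tx = ?b"
    using Tmat_carrier[of r L n m] unfolding N_def by (auto simp: vec_eq_iff)
  finally show ?thesis .
qed

lemma ex1_Phi_cond:
  assumes C: "inC r n m" and det: "det (Tmat r L n m) \<noteq> 0"
  shows "\<exists>!p. Phi_cond r L n m p"
proof -
  define N where "N = nat (vabs r n + vabs r m)"
  define b where "b = vec N (\<lambda>a. case Trows r n m ! a of (j, k) \<Rightarrow> - L j (mono (vabs r n - k)))"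
  show ?thesis
  proof (rule bij_betw_ex1_transfer[OF bij_betw_coeffs_Phi[OF C, folded N_def],
        where Q = "\<lambda>x. Tmat r L n m *\<^sub>v x = b"])
    show "p \<in> {p. in_span (- vabs r m) (vabs r n) p \<and> p (vabs r n) = 1}"
      if "Phi_cond r L n m p" for p
      using that unfolding Phi_cond_def by blast
    show "Phi_cond r L n m p \<longleftrightarrow> Tmat r L n m *\<^sub>v vec N (\<lambda>c. p (int c - vabs r m)) = b"
      if "p \<in> {p. in_span (- vabs r m) (vabs r n) p \<and> p (vabs r n) = 1}" for p
      using Phi_cond_iff_Tmat_equation[OF C] that unfolding b_def N_def by blast
    show "\<exists>!x. x \<in> carrier_vec N \<and> Tmat r L n m *\<^sub>v x = b"
      using ex1_mult_mat_vec_eq[OF Tmat_carrier det] unfolding b_def N_def by simp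
  qed
qed

text \<open>For \<open>n = -m\<close> the value \<open>\<Phi> = 1\<close> need not lie in the nominal span \<open>[-|m|, |n|]\<close>.\<close>

lemma Phi_in_span:
  assumes "normal r L n m"
  obtains a b where "in_span a b (Phi r L n m)"
proof (cases "antidiag r n m")
  case True
  then have "in_span 0 0 (Phi r L n m)"
    unfolding Phi_def in_span_def mono_def by simp
  then show ?thesis by (rule that)
next
  case False
  then have "inC r n m" and "det (Tmat r L n m) \<noteq> 0"
    using assms unfolding normal_def by auto
  then have "Phi_cond r L n m (Phi r L n m)"
    unfolding Phi_eq_The[OF False] by (rule theI'[OF ex1_Phi_cond])
  then show ?thesis
    using that unfolding Phi_cond_def by blast
qed

lemma transpose_Tmat_mult_coeffs_Xi:
  assumes C: "inC r n m" and X: "\<forall>j<r. in_span (- n j) (m j - 1) (X j)"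
    and c: "c < nat (vabs r n + vabs r m)"
  shows "(transpose_mat (Tmat r L n m) *\<^sub>v
      vec (nat (vabs r n + vabs r m)) (\<lambda>a. case Trows r n m ! a of (j, k) \<Rightarrow> X j (- k - 1))) $ c =
    (\<Sum>j<r. L j (lshift (X j) (- vabs r m + 1 + int c)))"
proof -
  define M N where "M = vabs r m" and "N = nat (vabs r n + vabs r m)"
  define x where "x = vec N (\<lambda>a. case Trows r n m ! a of (j, k) \<Rightarrow> X j (- k - 1))"
  have len: "length (Trows r n m) = N"
    using length_Trows[OF C] unfolding N_def .
  have "(transpose_mat (Tmat r L n m) *\<^sub>v x) $ c = (\<Sum>a<N. Tmat r L n m $$ (a, c) * x $ a)"
    using mult_mat_vec_index[of "transpose_mat (Tmat r L n m)" N N x c] c Tmat_carrier[of r L n m]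
    unfolding N_def x_def by simp
  also have "\<dots> = (\<Sum>a<length (Trows r n m).
      (\<lambda>(j, k). L j (mono (int c - M - k)) * X j (- k - 1)) (Trows r n m ! a))"
    using c Tmat_index[of _ r n m c _ _ L] unfolding len N_def M_def x_def
    by (intro sum.cong) (auto split: prod.split)
  also have "\<dots> = (\<Sum>(j, k)\<in>set (Trows r n m). L j (mono (int c - M - k)) * X j (- k - 1))"
    by (rule sum_nth_distinct[OF distinct_Trows])
  also have "\<dots> = (\<Sum>j<r. \<Sum>k\<in>{- m j..n j - 1}. L j (mono (int c - M - k)) * X j (- k - 1))"
  proof -
    have "set (Trows r n m) = (SIGMA j:{..<r}. {- m j..n j - 1})"
      unfolding set_Trows by auto
    then show ?thesis
      by (simp add: sum.Sigma)
  qed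
  also have "\<dots> = (\<Sum>j<r. \<Sum>t\<in>{- n j..m j - 1}. X j t * L j (mono (t + (- M + 1 + int c))))"
    by (intro sum.cong refl sum.reindex_bij_witness[of _ "\<lambda>t. - t - 1" "\<lambda>k. - k - 1"])
      (auto simp: algebra_simps)
  also have "\<dots> = (\<Sum>j<r. L j (lshift (X j) (- M + 1 + int c)))"
    using X lin_functional_lshift[OF lin] by (intro sum.cong) auto
  finally show ?thesis
    unfolding x_def N_def M_def .
qed

lemma Xi_cond_iff_Tmat_equation:
  assumes C: "inC r n m" and na: "\<not> antidiag r n m"
    and X: "\<forall>j t. (j, - t - 1) \<notin> set (Trows r n m) \<longrightarrow> X j t = 0"
  defines "N \<equiv> nat (vabs r n + vabs r m)"
  shows "Xi_cond r L n m X \<longleftrightarrow>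
    transpose_mat (Tmat r L n m) *\<^sub>v vec N (\<lambda>a. case Trows r n m ! a of (j, k) \<Rightarrow> X j (- k - 1)) =
    unit_vec N (N - 1)"
    (is "_ \<longleftrightarrow> ?Tx = _")
proof -
  define M K where "M = vabs r m" and "K = vabs r n"
  define F where "F = (\<lambda>s. \<Sum>j<r. L j (lshift (X j) s))"
  have N: "0 < N" "int N = K + M"
    using vabs_add_pos[OF C na] unfolding N_def K_def M_def by auto
  have span: "(\<forall>j. r \<le> j \<longrightarrow> X j = (\<lambda>i. 0)) \<and> (\<forall>j<r. in_span (- n j) (m j - 1) (X j))"
    using X Xi_support_iff by blast
  have "Xi_cond r L n m X \<longleftrightarrow> (\<forall>s. - M + 1 \<le> s \<and> s < K \<longrightarrow> F s = 0) \<and> F K = 1"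
    using span all_interval_uminus_iff[of "- K + 1" "M - 1" "\<lambda>s. F s = 0"]
    unfolding Xi_cond_def F_def M_def K_def by auto
  also have "\<dots> \<longleftrightarrow> (\<forall>c<N. F (- M + 1 + int c) = (if c = N - 1 then 1 else 0))"
    using all_interval_indicator_iff[OF N(1), of F "- M + 1"] N(2) by simp
  also have "\<dots> \<longleftrightarrow> ?Tx = unit_vec N (N - 1)"
    using transpose_Tmat_mult_coeffs_Xi[OF C conjunct2[OF span]] Tmat_carrier[of r L n m]
    unfolding N_def F_def M_def by (auto simp: vec_eq_iff)
  finally show ?thesis .
qed

lemma ex1_Xi_cond:
  assumes C: "inC r n m" and na: "\<not> antidiag r n m" and det: "det (Tmat r L n m) \<noteq> 0"
  shows "\<exists>!X. Xi_cond r L n m X"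
proof -
  define N where "N = nat (vabs r n + vabs r m)"
  define S where "S = {X :: nat \<Rightarrow> lpoly. \<forall>j t. (j, - t - 1) \<notin> set (Trows r n m) \<longrightarrow> X j t = 0}"
  have T: "transpose_mat (Tmat r L n m) \<in> carrier_mat N N" "det (transpose_mat (Tmat r L n m)) \<noteq> 0"
    using Tmat_carrier[of r L n m] det det_transpose[OF Tmat_carrier] unfolding N_def by auto
  show ?thesis
  proof (rule bij_betw_ex1_transfer[OF bij_betw_coeffs_Xi[OF C, folded N_def S_def],
        where Q = "\<lambda>x. transpose_mat (Tmat r L n m) *\<^sub>v x = unit_vec N (N - 1)"])
    show "X \<in> S" if "Xi_cond r L n m X" for X
      using that Xi_support_iff unfolding Xi_cond_def S_def by blast
    show "Xi_cond r L n m X \<longleftrightarrow> transpose_mat (Tmat r L n m) *\<^sub>v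
        vec N (\<lambda>a. case Trows r n m ! a of (j, k) \<Rightarrow> X j (- k - 1)) = unit_vec N (N - 1)"
      if "X \<in> S" for X
      using Xi_cond_iff_Tmat_equation[OF C na] that unfolding S_def N_def by blast
    show "\<exists>!x. x \<in> carrier_vec N \<and> transpose_mat (Tmat r L n m) *\<^sub>v x = unit_vec N (N - 1)"
      by (rule ex1_mult_mat_vec_eq[OF T]) simp
  qed
qed

end

section \<open>Reflection\<close>

locale symmetric_moment_functionals = moment_functionals +
  assumes symm: "\<And>j. j < r \<Longrightarrow> reflection_symmetric (L j)"
begin

lemma Phistar_cond_iff_Phi_cond_lreflect:
  "Phistar_cond r L m n q \<longleftrightarrow> Phi_cond r L n m (lreflect q)"
proof (cases "in_span (- vabs r n) (vabs r m) q")
  case True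
  have "L j (lshift (lreflect q) (- k)) = L j (lshift q k)" if "j < r" for j k
    using lin_functional_lshift_lreflect[OF lin[OF that] symm[OF that] True] by simp
  then have "(\<forall>k. - n j + 1 \<le> k \<and> k \<le> m j \<longrightarrow> L j (lshift q (- k)) = 0) \<longleftrightarrow>
      (\<forall>k. - m j \<le> k \<and> k \<le> n j - 1 \<longrightarrow> L j (lshift (lreflect q) (- k)) = 0)" if "j < r" for j
    using all_interval_uminus_iff[of "- n j + 1" "m j" "\<lambda>k. L j (lshift q k) = 0"] that by simp
  moreover have "lreflect q (vabs r n) = q (- vabs r n)"
    unfolding lreflect_def ..
  ultimately show ?thesis
    using True unfolding Phistar_cond_def Phi_cond_def in_span_lreflect_iff by simp
next
  case False
  then show ?thesis
    unfolding Phistar_cond_def Phi_cond_def in_span_lreflect_iff by simp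
qed

lemma Phistar_eq_lreflect_Phi:
  assumes "normal r L n m"
  shows "Phistar r L m n = lreflect (Phi r L n m)"
proof (cases "antidiag r n m")
  case True
  then show ?thesis
    using antidiag_swap unfolding Phistar_def Phi_def by (simp add: lreflect_mono)
next
  case False
  then have C: "inC r n m" and det: "det (Tmat r L n m) \<noteq> 0"
    using assms unfolding normal_def by auto
  have "Phistar r L m n = (THE q. Phistar_cond r L m n q)"
    using False antidiag_swap Phistar_eq_The by blast
  also have "\<dots> = lreflect (THE p. Phi_cond r L n m p)"
    by (rule The_eq_involution[OF ex1_Phi_cond[OF C det], of lreflect])
      (simp_all add: Phistar_cond_iff_Phi_cond_lreflect)
  also have "\<dots> = lreflect (Phi r L n m)"
    unfolding Phi_eq_The[OF False] ..
  finally show ?thesis .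
qed

lemma Xistar_cond_iff_Xi_cond_lreflect:
  "Xistar_cond r L m n X \<longleftrightarrow> Xi_cond r L n m (\<lambda>j. lreflect (X j))"
proof (cases "\<forall>j<r. in_span (- m j + 1) (n j) (X j)")
  case True
  have sum: "(\<Sum>j<r. L j (lshift (lreflect (X j)) s)) = (\<Sum>j<r. L j (lshift (X j) (- s)))" for s
    using True lin_functional_lshift_lreflect[OF lin symm] by (intro sum.cong) auto
  have "(\<forall>k. - vabs r m + 1 \<le> k \<and> k \<le> vabs r n - 1 \<longrightarrow> (\<Sum>j<r. L j (lshift (X j) (- k))) = 0) \<longleftrightarrow>
      (\<forall>k. - vabs r n + 1 \<le> k \<and> k \<le> vabs r m - 1 \<longrightarrow> (\<Sum>j<r. L j (lshift (X j) k)) = 0)"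
    using all_interval_uminus_iff[of "- vabs r m + 1" "vabs r n - 1"
        "\<lambda>k. (\<Sum>j<r. L j (lshift (X j) k)) = 0"] by simp
  then show ?thesis
    using True unfolding Xistar_cond_def Xi_cond_def in_span_lreflect_iff sum lreflect_eq_zero_iff
    by simp
next
  case False
  then show ?thesis
    unfolding Xistar_cond_def Xi_cond_def in_span_lreflect_iff by auto
qed

lemma Xistar_eq_lreflect_Xi:
  assumes "normal r L n m"
  shows "Xistar r L m n = (\<lambda>j. lreflect (Xi r L n m j))"
proof (cases "antidiag r n m")
  case True
  then show ?thesis
    using antidiag_swap unfolding Xistar_def Xi_def by (simp add: lreflect_def)
next
  case False
  then have C: "inC r n m" and det: "det (Tmat r L n m) \<noteq> 0"
    using assms unfolding normal_def by auto
  have "Xistar r L m n = (THE X. Xistar_cond r L m n X)"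
    using False antidiag_swap Xistar_eq_The by blast
  also have "\<dots> = (\<lambda>j. lreflect ((THE X. Xi_cond r L n m X) j))"
    by (rule The_eq_involution[OF ex1_Xi_cond[OF C False det], of "\<lambda>X j. lreflect (X j)"])
      (simp_all add: Xistar_cond_iff_Xi_cond_lreflect)
  also have "\<dots> = (\<lambda>j. lreflect (Xi r L n m j))"
    unfolding Xi_eq_The[OF False] ..
  finally show ?thesis .
qed

lemma L_lshift_Phistar:
  assumes "normal r L n m" and "j < r"
  shows "L j (lshift (Phistar r L m n) s) = L j (lshift (Phi r L n m) (- s))"
proof -
  obtain a b where "in_span a b (Phi r L n m)"
    using Phi_in_span[OF assms(1)] .
  then show ?thesis
    unfolding Phistar_eq_lreflect_Phi[OF assms(1)]
    by (rule lin_functional_lshift_lreflect[OF lin[OF assms(2)] symm[OF assms(2)]])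
qed

end

theorem proposition10p1:
  fixes r :: nat and L :: "nat \<Rightarrow> lpoly \<Rightarrow> complex"
    and n m :: "nat \<Rightarrow> int"
  assumes r: "r \<ge> 1"
    and lin: "\<forall>j<r. lin_functional (L j)"
    and symm: "\<forall>j<r. \<forall>k::nat. L j (mono (int k)) = L j (mono (- int k))"
    and C: "inC r n m"
  shows "(normal r L n m \<longleftrightarrow> normal r L m n) \<and>
    (normal r L n m \<longrightarrow>
      (\<forall>z. z \<noteq> 0 \<longrightarrow> leval (Phistar r L n m) z = leval (Phi r L m n) (1 / z)) \<and>
      (\<forall>j<r. \<forall>z. z \<noteq> 0 \<longrightarrow> leval (Xistar r L n m j) z = leval (Xi r L m n j) (1 / z)) \<and>
      alpha r L n m = beta r L m n \<and>
      (\<forall>j<r. rho_defined r L n m j \<and> sigma_defined r L m n j \<longrightarrow>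
              rho r L n m j = sigma r L m n j) \<and>
      (\<forall>k<r. \<forall>l<r. gamma_defined r L n m k l \<and> eta_defined r L m n k l \<longrightarrow>
              gamma r L n m k l = eta r L m n k l))"
proof -
  have symm': "\<forall>j<r. reflection_symmetric (L j)"
    using symm unfolding reflection_symmetric_def .
  interpret symmetric_moment_functionals r L
    using lin symm' by unfold_locales auto
  show ?thesis
  proof (intro conjI impI allI)
    show swap: "normal r L n m \<longleftrightarrow> normal r L m n"
      by (rule normal_swap[OF symm'])
    assume N: "normal r L n m"
    with swap have N': "normal r L m n" ..
    show "leval (Phistar r L n m) z = leval (Phi r L m n) (1 / z)" for z
      by (simp add: Phistar_eq_lreflect_Phi[OF N'] leval_lreflect)
    show "leval (Xistar r L n m j) z = leval (Xi r L m n j) (1 / z)" for j z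
      by (simp add: Xistar_eq_lreflect_Xi[OF N'] leval_lreflect)
    show "alpha r L n m = beta r L m n"
      unfolding alpha_def beta_def Phistar_eq_lreflect_Phi[OF N] by (simp add: lreflect_def)
    show "rho r L n m j = sigma r L m n j"
      if "j < r" and "rho_defined r L n m j \<and> sigma_defined r L m n j" for j
      using that L_lshift_Phistar[OF N, of j "n j"] L_lshift_Phistar[of "vsub n (unitv j)" m j "n j - 1"]
      unfolding rho_def sigma_def rho_defined_def by simp
    show "gamma r L n m k l = eta r L m n k l"
      if "k < r" "l < r" and "gamma_defined r L n m k l \<and> eta_defined r L m n k l" for k l
      using that L_lshift_Phistar[OF N, of l "n l"] L_lshift_Phistar[of "vadd n (unitv k)" m l "n l"]
      unfolding gamma_def eta_def gamma_defined_def by simp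
  qed
qed

end
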